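(* Let $h_y$ be a function realized by a convolutional arithmetic circuit, with corresponding coefficient tensor $\mathcal{A}^y$, i.e. $h_y(\mathbf{x}_1,\ldots,\mathbf{x}_N)=\sum_{d_1\ldots d_N=1}^{M}\mathcal{A}^y_{d_1\ldots d_N}\prod_{i=1}^{N}f_{\theta_{d_i}}(\mathbf{x}_i)$. Assume that the network's representation functions $f_{\theta_1},\ldots,f_{\theta_M}$ are linearly independent, and that they, as well as the functions $g_\nu,g'_\nu$ appearing in the definition of separation rank, are measurable and square-integrable. Then, for any partition $(I,J)$ of $[N]$, it holds that $sep(h_y;I,J)=rank\,\llbracket\mathcal{A}^y\rrbracket_{I,J}$.
   Context: A convolutional arithmetic circuit takes as input $X=(\mathbf{x}_1,\ldots,\mathbf{x}_N)\in(\mathbb{R}^s)^N$ (e.g. $N$ image patches of dimension $s$). Its first (representation) layer applies $M$ representation functions $f_{\theta_1},\ldots,f_{\theta_M}:\mathbb{R}^s\to\mathbb{R}$ to every patch; it is followed by hidden layers each consisting of a $1\times1$ convolution (linear weights, linear activation) and product pooling over non-overlapping windows, and a final dense linear output layer. Every output $y$ realizes a function of the form $h_y(\mathbf{x}_1,\ldots,\mathbf{x}_N)=\sum_{d_1\ldots d_N=1}^{M}\mathcal{A}^y_{d_1\ldots d_N}\prod_{i=1}^{N}f_{\theta_{d_i}}(\mathbf{x}_i)$, where the coefficient tensor $\mathcal{A}^y$ is of order $N$ with dimension $M$ in each mode, and its entries are polynomials in the network's linear weights. For a partition $(I,J)$ of $[N]=\{1,\ldots,N\}$ with $I=\{i_1<\cdots<i_{|I|}\}$,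 $J=\{j_1<\cdots<j_{|J|}\}$, the separation rank of $h:(\mathbb{R}^s)^N\to\mathbb{R}$ w.r.t. $(I,J)$ is $sep(h;I,J):=\min\{R\in\mathbb{N}\cup\{0\}:\exists\, g_1\ldots g_R:(\mathbb{R}^s)^{|I|}\to\mathbb{R},\ g'_1\ldots g'_R:(\mathbb{R}^s)^{|J|}\to\mathbb{R}\text{ s.t. } h(\mathbf{x}_1,\ldots,\mathbf{x}_N)=\sum_{\nu=1}^{R}g_\nu(\mathbf{x}_{i_1},\ldots,\mathbf{x}_{i_{|I|}})\,g'_\nu(\mathbf{x}_{j_1},\ldots,\mathbf{x}_{j_{|J|}})\}$ (if $I$ or $J$ is empty it is $1$, or $0$ if $h\equiv0$). The matricization $\llbracket\mathcal{A}\rrbracket_{I,J}$ of an order-$N$ tensor $\mathcal{A}$ with mode dimensions $M_1,\ldots,M_N$ w.r.t. $(I,J)$ is the $\prod_{t}M_{i_t}$-by-$\prod_{t}M_{j_t}$ matrix holding $\mathcal{A}_{d_1\ldots d_N}$ in row index $1+\sum_{t=1}^{|I|}(d_{i_t}-1)\prod_{t'=t+1}^{|I|}M_{i_{t'}}$ and column index $1+\sum_{t=1}^{|J|}(d_{j_t}-1)\prod_{t'=t+1}^{|J|}M_{j_{t'}}$. *)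

theory Defs
  imports "HOL-Analysis.Analysis" "Jordan_Normal_Form.DL_Rank"
begin

text \<open>Conventions: modes are indexed 0..N-1 and mode values 0..M-1 (0-based
version of the paper's 1-based indexing).  A patch lives in a Euclidean space
'a (standing for R^s).  An input X = (x_0,...,x_{N-1}) is a map nat => 'a
(values outside {..<N} are irrelevant).  A coefficient tensor of order N with
dimension M in each mode is a function on index tuples d in {..<N} ->E {..<M}.\<close>

definition conv_func ::
  "nat \<Rightarrow> nat \<Rightarrow> (nat \<Rightarrow> 'a \<Rightarrow> real) \<Rightarrow> ((nat \<Rightarrow> nat) \<Rightarrow> real) \<Rightarrow> (nat \<Rightarrow> 'a) \<Rightarrow> real"
  where "conv_func N M f A X =
     (\<Sum>d \<in> {..<N} \<rightarrow>\<^sub>E {..<M}. A d * (\<Prod>i<N. f (d i) (X i)))"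

definition sq_int_on :: "nat set \<Rightarrow> ((nat \<Rightarrow> 'a::euclidean_space) \<Rightarrow> real) \<Rightarrow> bool"
  where "sq_int_on K g \<longleftrightarrow>
     g \<in> borel_measurable (PiM K (\<lambda>_. lborel)) \<and>
     integrable (PiM K (\<lambda>_. lborel)) (\<lambda>x. (g x)\<^sup>2)"

definition sep_rank ::
  "((nat \<Rightarrow> 'a::euclidean_space) \<Rightarrow> real) \<Rightarrow> nat set \<Rightarrow> nat set \<Rightarrow> nat"
  where "sep_rank h I J =
    (if I = {} \<or> J = {} then (if (\<forall>X. h X = 0) then 0 else 1)
     else (LEAST R. \<exists>g g' :: nat \<Rightarrow> (nat \<Rightarrow> 'a) \<Rightarrow> real.
              (\<forall>\<nu><R. sq_int_on I (g \<nu>) \<and> sq_int_on J (g' \<nu>)) \<and>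
              (\<forall>X. h X = (\<Sum>\<nu><R. g \<nu> (restrict X I) * g' \<nu> (restrict X J)))))"

definition pos_in :: "nat set \<Rightarrow> nat \<Rightarrow> nat"
  where "pos_in K k = card {i \<in> K. i < k}"

text \<open>The paper's index formula
1 + sum_t (d_{i_t}-1) M^(|I|-t) is, 0-based, r = sum_t d_{i_t} M^(L-1-t); this
recovers d_{i_t} from r.\<close>
definition digit :: "nat \<Rightarrow> nat \<Rightarrow> nat \<Rightarrow> nat \<Rightarrow> nat"
  where "digit M L r t = (r div M ^ (L - 1 - t)) mod M"

definition matricize ::
  "nat \<Rightarrow> nat \<Rightarrow> ((nat \<Rightarrow> nat) \<Rightarrow> real) \<Rightarrow> nat set \<Rightarrow> nat set \<Rightarrow> real mat"
  where "matricize N M A I J =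
    mat (M ^ card I) (M ^ card J)
      (\<lambda>(r, c). A (\<lambda>k. if k < N then
                          (if k \<in> I then digit M (card I) r (pos_in I k)
                           else digit M (card J) c (pos_in J k))
                        else undefined))"

definition mat_rank :: "real mat \<Rightarrow> nat"
  where "mat_rank B = vec_space.rank (dim_row B) B"

end

theory Submission
  imports Defs
begin

text \<open>Splitting each input into its \<open>I\<close>- and \<open>J\<close>-patches, \<open>h\<^sub>y\<close> is the bilinear form of the
  matricization \<open>B\<close> evaluated on products of representation functions, so a rank
  factorization of \<open>B\<close> yields a separated representation with \<open>rank B\<close> terms, which are
  square-integrable. Conversely, linear independence of \<open>f\<^sub>0, \<dots>, f\<^bsub>M-1\<^esub>\<close> gives finitely
  supported point weights dual to them; their tensor products recover every coefficient of
  \<open>\<A>\<^sup>y\<close> from \<open>h\<^sub>y\<close>, and applied to any separated representation with \<open>R\<close> terms they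
  exhibit \<open>B\<close> as a sum of \<open>R\<close> rank-one matrices.\<close>

lemma rank_le_sum_of_rank_one:
  fixes B :: "'a::field mat"
  assumes "B \<in> carrier_mat n nc"
    and "\<And>i j. i < n \<Longrightarrow> j < nc \<Longrightarrow> B $$ (i, j) = (\<Sum>\<nu><R. u \<nu> i * v \<nu> j)"
  shows "vec_space.rank n B \<le> R"
  using assms
proof (induction R arbitrary: B)
  case 0
  then have "B = 0\<^sub>m n nc" by (intro eq_matI) auto
  then show ?case using vec_space.rank_0I by simp
next
  case (Suc R)
  define B1 where "B1 = mat n nc (\<lambda>(i, j). \<Sum>\<nu><R. u \<nu> i * v \<nu> j)"
  define B2 where "B2 = mat n nc (\<lambda>(i, j). u R i * v R j)"
  have "B = B1 + B2" using Suc.prems by (intro eq_matI) (auto simp: B1_def B2_def)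
  moreover have "vec_space.rank n B1 \<le> R" by (rule Suc.IH) (auto simp: B1_def)
  moreover have "vec_space.rank n B2 \<le> 1"
    by (rule vec_space.rank_le_1_product_entries[of B2 n nc "u R" "v R"]) (auto simp: B2_def)
  moreover have "vec_space.rank n (B1 + B2) \<le> vec_space.rank n B1 + vec_space.rank n B2"
    by (rule vec_space.rank_subadditive) (auto simp: B1_def B2_def)
  ultimately show ?case by simp
qed

lemma rank_factorization:
  fixes B :: "'a::field mat"
  assumes B: "B \<in> carrier_mat n nc"
  obtains u v where
    "\<And>i j. i < n \<Longrightarrow> j < nc \<Longrightarrow> B $$ (i, j) = (\<Sum>\<nu><vec_space.rank n B. u \<nu> i * v \<nu> j)"
proof -
  interpret V: vec_space "TYPE('a)" n .
  obtain S where S: "maximal S (\<lambda>T. T \<subseteq> set (cols B) \<and> V.lin_indpt T)"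
    using maximal_exists[of "\<lambda>T. T \<subseteq> set (cols B) \<and> V.lin_indpt T" "card (set (cols B))" "{}"]
    by (meson List.finite_set card_mono empty_iff empty_subsetI V.finite_lin_indpt2 rev_finite_subset)
  have Ssub: "S \<subseteq> set (cols B)" and Sli: "V.lin_indpt S" using S by (auto simp: maximal_def)
  have fin: "finite S" using Ssub finite_subset by blast
  have SC: "S \<subseteq> carrier_vec n" using Ssub B cols_dim by blast
  have col_in_span: "col B j \<in> V.span S" if j: "j < nc" for j
  proof (rule ccontr)
    assume notin: "col B j \<notin> V.span S"
    have cj: "col B j \<in> set (cols B)" using j B by (simp add: cols_def)
    then have "col B j \<notin> S" using notin V.in_own_span SC by auto
    then have "V.lin_indpt (insert (col B j) S)"
      using V.lin_dep_iff_in_span[OF SC Sli] notin cj B cols_dim by auto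
    then show False using S cj Ssub \<open>col B j \<notin> S\<close> unfolding maximal_def by blast
  qed
  have "\<forall>j. \<exists>a. j < nc \<longrightarrow> V.lincomb a S = col B j"
    using V.finite_in_span[OF fin] SC col_in_span by (metis V.carrier_vs_is_self)
  then obtain a where a: "\<And>j. j < nc \<Longrightarrow> V.lincomb (a j) S = col B j" by metis
  obtain e where e: "bij_betw e {..<card S} S"
    using fin ex_bij_betw_nat_finite lessThan_atLeast0 by metis
  show thesis
  proof
    fix i j assume i: "i < n" and j: "j < nc"
    have "B $$ (i, j) = (\<Sum>x\<in>S. a j x * x $ i)"
      using V.lincomb_index[OF i SC, of "a j"] a[OF j] i j B by simp
    also have "\<dots> = (\<Sum>\<nu><card S. e \<nu> $ i * a j (e \<nu>))"
      using sum.reindex_bij_betw[OF e, of "\<lambda>x. a j x * x $ i"] by (simp add: mult.commute)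
    finally show "B $$ (i, j) = (\<Sum>\<nu><V.rank B. e \<nu> $ i * a j (e \<nu>))"
      by (simp add: V.rank_card_indpt[OF B S])
  qed
qed

definition lin_indep_funs :: "nat \<Rightarrow> (nat \<Rightarrow> 'b \<Rightarrow> real) \<Rightarrow> bool"
  where "lin_indep_funs M f \<longleftrightarrow> (\<forall>c. (\<forall>x. (\<Sum>m<M. c m * f m x) = 0) \<longrightarrow> (\<forall>m<M. c m = 0))"

text \<open>Finitely supported point weights \<open>W j\<close> whose pairings with \<open>f 0, \<dots>, f (M - 1)\<close> form the
  dual basis; the support condition lets \<open>S\<close> be enlarged without changing the pairings.\<close>

definition dual_weights :: "nat \<Rightarrow> (nat \<Rightarrow> 'b \<Rightarrow> real) \<Rightarrow> 'b set \<Rightarrow> (nat \<Rightarrow> 'b \<Rightarrow> real) \<Rightarrow> bool"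
  where "dual_weights M f S W \<longleftrightarrow> finite S \<and> (\<forall>j x. x \<notin> S \<longrightarrow> W j x = 0) \<and>
     (\<forall>j<M. \<forall>m<M. (\<Sum>x\<in>S. W j x * f m x) = (if m = j then 1 else 0))"

lemma dual_weights_sum_insert:
  assumes "dual_weights M f S W"
  shows "(\<Sum>x\<in>insert q S. W j x * g x) = (\<Sum>x\<in>S. W j x * g x)"
  using assms unfolding dual_weights_def by (intro sum.mono_neutral_right) auto

lemma dual_weights_new_weight:
  assumes dual: "dual_weights M f S W"
    and q: "f M q \<noteq> (\<Sum>j<M. (\<Sum>x\<in>S. W j x * f M x) * f j q)"
  obtains \<psi> where "\<And>x. x \<notin> insert q S \<Longrightarrow> \<psi> x = 0"
    and "\<And>m. m < M \<Longrightarrow> (\<Sum>x\<in>insert q S. \<psi> x * f m x) = 0"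
    and "(\<Sum>x\<in>insert q S. \<psi> x * f M x) = 1"
proof -
  have S: "finite S" and W_supp: "\<And>j x. x \<notin> S \<Longrightarrow> W j x = 0"
    and W: "\<And>j m. j < M \<Longrightarrow> m < M \<Longrightarrow> (\<Sum>x\<in>S. W j x * f m x) = (if m = j then 1 else 0)"
    using dual by (auto simp: dual_weights_def)
  define d where "d = f M q - (\<Sum>j<M. (\<Sum>x\<in>S. W j x * f M x) * f j q)"
  text \<open>The point mass at \<open>q\<close>, corrected to annihilate \<open>f 0, \<dots>, f (M - 1)\<close>;
    the hypothesis on \<open>q\<close> says that its pairing \<open>d\<close> with \<open>f M\<close> is nonzero.\<close>
  define \<psi> where "\<psi> x = ((if x = q then 1 else 0) - (\<Sum>j<M. f j q * W j x)) / d" for x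
  have \<psi>_sum: "(\<Sum>x\<in>insert q S. \<psi> x * g x) = (g q - (\<Sum>j<M. f j q * (\<Sum>x\<in>S. W j x * g x))) / d" for g
  proof -
    have "(\<Sum>x\<in>insert q S. \<psi> x * g x)
        = (\<Sum>x\<in>insert q S. (if x = q then g x else 0) - (\<Sum>j<M. f j q * (W j x * g x))) / d"
      unfolding sum_divide_distrib
      by (intro sum.cong refl) (simp add: \<psi>_def left_diff_distrib sum_distrib_right mult.assoc)
    also have "\<dots> = (g q - (\<Sum>j<M. f j q * (\<Sum>x\<in>insert q S. W j x * g x))) / d"
      using S by (simp add: sum_subtractf sum_distrib_left sum.swap[where A = "insert q S"])
    finally show ?thesis by (simp add: dual_weights_sum_insert[OF dual])
  qed
  show thesis
  proof
    show "\<psi> x = 0" if "x \<notin> insert q S" for x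
      using that W_supp by (simp add: \<psi>_def)
    show "(\<Sum>x\<in>insert q S. \<psi> x * f m x) = 0" if "m < M" for m
    proof -
      have "(\<Sum>j<M. f j q * (\<Sum>x\<in>S. W j x * f m x)) = (\<Sum>j<M. if j = m then f m q else 0)"
        using W that by (intro sum.cong) auto
      then show ?thesis using that by (simp add: \<psi>_sum)
    qed
    show "(\<Sum>x\<in>insert q S. \<psi> x * f M x) = 1"
      using q by (simp add: \<psi>_sum d_def mult.commute)
  qed
qed

lemma dual_weights_Suc:
  assumes dual: "dual_weights M f S W"
    and q: "f M q \<noteq> (\<Sum>j<M. (\<Sum>x\<in>S. W j x * f M x) * f j q)"
  shows "\<exists>S' W'. dual_weights (Suc M) f S' W'"
proof -
  obtain \<psi> where \<psi>_supp: "\<And>x. x \<notin> insert q S \<Longrightarrow> \<psi> x = 0"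
    and \<psi>_lower: "\<And>m. m < M \<Longrightarrow> (\<Sum>x\<in>insert q S. \<psi> x * f m x) = 0"
    and \<psi>_top: "(\<Sum>x\<in>insert q S. \<psi> x * f M x) = 1"
    using dual_weights_new_weight[OF dual q] by blast
  have S: "finite S" and W_supp: "\<And>j x. x \<notin> S \<Longrightarrow> W j x = 0"
    and W: "\<And>j m. j < M \<Longrightarrow> m < M \<Longrightarrow> (\<Sum>x\<in>S. W j x * f m x) = (if m = j then 1 else 0)"
    using dual by (auto simp: dual_weights_def)
  define a where "a j = (\<Sum>x\<in>S. W j x * f M x)" for j
  define W' where "W' j x = (if j = M then \<psi> x else W j x - a j * \<psi> x)" for j x
  have "(\<Sum>x\<in>insert q S. W' j x * f m x) = (if m = j then 1 else 0)"
    if "j < Suc M" "m < Suc M" for j m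
  proof (cases "j = M")
    case True
    then show ?thesis using that \<psi>_lower \<psi>_top by (auto simp: W'_def less_Suc_eq)
  next
    case False
    then have "(\<Sum>x\<in>insert q S. W' j x * f m x)
        = (\<Sum>x\<in>S. W j x * f m x) - a j * (\<Sum>x\<in>insert q S. \<psi> x * f m x)"
      by (simp add: W'_def left_diff_distrib sum_subtractf dual_weights_sum_insert[OF dual]
          mult.assoc sum_distrib_left)
    then show ?thesis using False that W \<psi>_lower \<psi>_top by (auto simp: less_Suc_eq a_def)
  qed
  moreover have "W' j x = 0" if "x \<notin> insert q S" for j x
    using that W_supp \<psi>_supp by (simp add: W'_def)
  moreover have "finite (insert q S)" using S by simp
  ultimately have "dual_weights (Suc M) f (insert q S) W'"
    unfolding dual_weights_def by (intro conjI allI impI) simp_all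
  then show ?thesis by (intro exI)
qed

lemma lin_indep_dual_weights:
  assumes "lin_indep_funs M f"
  shows "\<exists>S W. dual_weights M f S W"
  using assms
proof (induction M)
  case 0
  have "dual_weights 0 f {} (\<lambda>_ _. 0)" by (simp add: dual_weights_def)
  then show ?case by (intro exI)
next
  case (Suc M)
  have "lin_indep_funs M f"
    unfolding lin_indep_funs_def
  proof (rule allI, rule impI)
    fix c assume "\<forall>x. (\<Sum>m<M. c m * f m x) = 0"
    then have "\<forall>x. (\<Sum>m<Suc M. (if m < M then c m else 0) * f m x) = 0" by simp
    then have "\<forall>m<Suc M. (if m < M then c m else 0) = 0"
      by (rule Suc.prems[unfolded lin_indep_funs_def, THEN spec, THEN mp])
    then show "\<forall>m<M. c m = 0" by (metis less_SucI)
  qed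
  then obtain S W where dual: "dual_weights M f S W" using Suc.IH by auto
  define a where "a j = (\<Sum>x\<in>S. W j x * f M x)" for j
  have "\<exists>q. f M q \<noteq> (\<Sum>j<M. a j * f j q)"
  proof (rule ccontr)
    assume "\<not> ?thesis"
    then have "\<forall>x. (\<Sum>m<Suc M. (if m < M then - a m else 1) * f m x) = 0"
      by (simp add: sum_negf)
    then have "\<forall>m<Suc M. (if m < M then - a m else 1) = (0::real)"
      by (rule Suc.prems[unfolded lin_indep_funs_def, THEN spec, THEN mp])
    then have "(if M < M then - a M else 1) = (0::real)" by blast
    then show False by simp
  qed
  then show ?case by (elim exE) (rule dual_weights_Suc[OF dual, unfolded a_def[symmetric]])
qed

lemma sq_int_on_prod:
  fixes f :: "nat \<Rightarrow> 'a::euclidean_space \<Rightarrow> real"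
  assumes K: "finite K"
    and meas: "\<And>i. i \<in> K \<Longrightarrow> f i \<in> borel_measurable lborel"
    and sqint: "\<And>i. i \<in> K \<Longrightarrow> integrable lborel (\<lambda>x. (f i x)\<^sup>2)"
  shows "sq_int_on K (\<lambda>Y. \<Prod>i\<in>K. f i (Y i))"
  unfolding sq_int_on_def
proof
  interpret product_sigma_finite "\<lambda>_. lborel :: 'a measure" by standard
  show "(\<lambda>Y. \<Prod>i\<in>K. f i (Y i)) \<in> borel_measurable (Pi\<^sub>M K (\<lambda>_. lborel))"
    using meas by (intro borel_measurable_prod) (simp add: measurable_component_singleton)
  have "integrable (Pi\<^sub>M K (\<lambda>_. lborel)) (\<lambda>Y. \<Prod>i\<in>K. (f i (Y i))\<^sup>2)"
    using sqint by (rule product_integrable_prod[OF K])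
  then show "integrable (Pi\<^sub>M K (\<lambda>_. lborel)) (\<lambda>Y. (\<Prod>i\<in>K. f i (Y i))\<^sup>2)"
    by (simp add: prod_power_distrib)
qed

lemma sq_int_on_lin:
  assumes g: "sq_int_on K g" and h: "sq_int_on K h"
  shows "sq_int_on K (\<lambda>Y. a * g Y + b * h Y)"
  unfolding sq_int_on_def
proof
  have "g \<in> borel_measurable (Pi\<^sub>M K (\<lambda>_. lborel))" "h \<in> borel_measurable (Pi\<^sub>M K (\<lambda>_. lborel))"
    using g h by (simp_all add: sq_int_on_def)
  then show meas: "(\<lambda>Y. a * g Y + b * h Y) \<in> borel_measurable (Pi\<^sub>M K (\<lambda>_. lborel))"
    by measurable
  have bound_int: "integrable (Pi\<^sub>M K (\<lambda>_. lborel)) (\<lambda>Y. 2 * a\<^sup>2 * (g Y)\<^sup>2 + 2 * b\<^sup>2 * (h Y)\<^sup>2)"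
    using g h unfolding sq_int_on_def by simp
  have "(a * g Y + b * h Y)\<^sup>2 \<le> 2 * a\<^sup>2 * (g Y)\<^sup>2 + 2 * b\<^sup>2 * (h Y)\<^sup>2" for Y
    using zero_le_power2[of "a * g Y - b * h Y"] by (simp add: power2_eq_square algebra_simps)
  then have "AE Y in Pi\<^sub>M K (\<lambda>_. lborel).
      norm ((a * g Y + b * h Y)\<^sup>2) \<le> norm (2 * a\<^sup>2 * (g Y)\<^sup>2 + 2 * b\<^sup>2 * (h Y)\<^sup>2)"
    by (intro AE_I2) simp
  moreover have "(\<lambda>Y. (a * g Y + b * h Y)\<^sup>2) \<in> borel_measurable (Pi\<^sub>M K (\<lambda>_. lborel))"
    using meas by measurable
  ultimately show "integrable (Pi\<^sub>M K (\<lambda>_. lborel)) (\<lambda>Y. (a * g Y + b * h Y)\<^sup>2)"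
    by (intro Bochner_Integration.integrable_bound[OF bound_int])
qed

lemma sq_int_on_sum:
  fixes R :: nat
  assumes "\<And>r. r < R \<Longrightarrow> sq_int_on K (G r)"
  shows "sq_int_on K (\<lambda>Y. \<Sum>r<R. c r * G r Y)"
  using assms
proof (induction R)
  case 0
  then show ?case by (simp add: sq_int_on_def)
next
  case (Suc R)
  have "sq_int_on K (\<lambda>Y. 1 * (\<Sum>r<R. c r * G r Y) + c R * G R Y)"
    using Suc by (intro sq_int_on_lin) auto
  then show ?case by simp
qed

lemma bij_betw_pos_in:
  assumes "finite K"
  shows "bij_betw (pos_in K) K {..<card K}"
proof -
  have less: "pos_in K x < pos_in K y" if "x \<in> K" "x < y" for x y
    unfolding pos_in_def using assms that by (intro psubset_card_mono) auto
  have "inj_on (pos_in K) K"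
    by (rule inj_onI) (metis less less_irrefl linorder_neqE_nat)
  moreover have "pos_in K ` K \<subseteq> {..<card K}"
    unfolding pos_in_def using assms by (auto intro!: psubset_card_mono)
  ultimately show ?thesis
    unfolding bij_betw_def by (simp add: card_image card_subset_eq)
qed

lemma eq_if_low_digits_eq:
  fixes M :: nat
  assumes "r < M ^ L" "r' < M ^ L" "\<And>s. s < L \<Longrightarrow> r div M ^ s mod M = r' div M ^ s mod M"
  shows "r = r'"
  using assms
proof (induction L arbitrary: r r')
  case (Suc L)
  have "r div M < M ^ L" "r' div M < M ^ L"
    using Suc.prems(1,2) by (simp_all add: less_mult_imp_div_less mult.commute)
  moreover have "r div M div M ^ s mod M = r' div M div M ^ s mod M" if "s < L" for s
    using Suc.prems(3)[of "Suc s"] that by (simp add: div_mult2_eq)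
  ultimately have "r div M = r' div M" by (rule Suc.IH)
  moreover have "r mod M = r' mod M" using Suc.prems(3)[of 0] by simp
  ultimately show ?case by (metis div_mult_mod_eq)
qed simp

lemma digit_inj:
  assumes "r < M ^ L" "r' < M ^ L" "\<And>t. t < L \<Longrightarrow> digit M L r t = digit M L r' t"
  shows "r = r'"
proof (rule eq_if_low_digits_eq[OF assms(1,2)])
  fix s assume "s < L"
  then show "r div M ^ s mod M = r' div M ^ s mod M"
    using assms(3)[of "L - 1 - s"] by (simp add: digit_def)
qed

lemma digit_pos_in_inj:
  assumes K: "finite K" and r: "r < M ^ card K" "r' < M ^ card K"
    and eq: "\<And>k. k \<in> K \<Longrightarrow> digit M (card K) r (pos_in K k) = digit M (card K) r' (pos_in K k)"
  shows "r = r'"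
proof (rule digit_inj[OF r])
  fix t assume "t < card K"
  then obtain k where "k \<in> K" "pos_in K k = t"
    using bij_betw_pos_in[OF K] by (metis bij_betw_iff_bijections lessThan_iff)
  then show "digit M (card K) r t = digit M (card K) r' t" using eq by blast
qed

lemma digit_less: "r < M ^ L \<Longrightarrow> 0 < L \<Longrightarrow> digit M L r t < M"
  unfolding digit_def by (metis gr0I less_nat_zero_code mod_less_divisor zero_power)

definition prod_basis :: "nat \<Rightarrow> (nat \<Rightarrow> 'a \<Rightarrow> real) \<Rightarrow> nat set \<Rightarrow> nat \<Rightarrow> (nat \<Rightarrow> 'a) \<Rightarrow> real"
  where "prod_basis M f K r Y = (\<Prod>i\<in>K. f (digit M (card K) r (pos_in K i)) (Y i))"

lemma sq_int_on_prod_basis: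
  fixes f :: "nat \<Rightarrow> 'a::euclidean_space \<Rightarrow> real"
  assumes "finite K" "r < M ^ card K"
    and "\<And>m. m < M \<Longrightarrow> f m \<in> borel_measurable lborel"
    and "\<And>m. m < M \<Longrightarrow> integrable lborel (\<lambda>x. (f m x)\<^sup>2)"
  shows "sq_int_on K (prod_basis M f K r)"
proof -
  have "digit M (card K) r (pos_in K i) < M" if "i \<in> K" for i
    using assms(1,2) that by (intro digit_less) (auto simp: card_gt_0_iff)
  then show ?thesis
    unfolding prod_basis_def using assms by (intro sq_int_on_prod) auto
qed

lemma conv_func_restrict: "conv_func N M f A (restrict X {..<N}) = conv_func N M f A X"
  unfolding conv_func_def by (intro sum.cong refl arg_cong2[where f = "(*)"] prod.cong) auto

definition dual_eval :: "'b set \<Rightarrow> (nat \<Rightarrow> 'b \<Rightarrow> real) \<Rightarrow> nat set \<Rightarrow> (nat \<Rightarrow> nat) \<Rightarrow> ((nat \<Rightarrow> 'b) \<Rightarrow> real) \<Rightarrow> real"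
  where "dual_eval S W K e g = (\<Sum>Y\<in>K \<rightarrow>\<^sub>E S. (\<Prod>i\<in>K. W (e i) (Y i)) * g Y)"

lemma dual_eval_sum:
  "dual_eval S W K e (\<lambda>Y. \<Sum>\<nu><R. F \<nu> Y) = (\<Sum>\<nu><R. dual_eval S W K e (F \<nu>))"
  unfolding dual_eval_def by (simp add: sum_distrib_left sum.swap[where B = "{..<R}"])

lemma dual_eval_cong: "(\<And>i. i \<in> K \<Longrightarrow> e i = e' i) \<Longrightarrow> dual_eval S W K e g = dual_eval S W K e' g"
  unfolding dual_eval_def by (intro sum.cong refl arg_cong2[where f = "(*)"] prod.cong) auto

lemma dual_eval_separated:
  assumes "finite I" "finite J" "I \<inter> J = {}"
  shows "dual_eval S W (I \<union> J) e (\<lambda>X. F (restrict X I) * G (restrict X J))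
       = dual_eval S W I e F * dual_eval S W J e G"
proof -
  have "dual_eval S W I e F * dual_eval S W J e G
      = (\<Sum>(Y, Z)\<in>(I \<rightarrow>\<^sub>E S) \<times> (J \<rightarrow>\<^sub>E S).
           ((\<Prod>i\<in>I. W (e i) (Y i)) * (\<Prod>i\<in>J. W (e i) (Z i))) * (F Y * G Z))"
    unfolding dual_eval_def sum_product sum.cartesian_product by (simp add: mult_ac)
  also have "\<dots> = dual_eval S W (I \<union> J) e (\<lambda>X. F (restrict X I) * G (restrict X J))"
    unfolding dual_eval_def
  proof (rule sum.reindex_bij_witness[where i = "\<lambda>X. (restrict X I, restrict X J)" and j = "merge I J"])
    fix YZ assume "YZ \<in> (I \<rightarrow>\<^sub>E S) \<times> (J \<rightarrow>\<^sub>E S)"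
    then obtain Y Z where YZ: "YZ = (Y, Z)" "Y \<in> I \<rightarrow>\<^sub>E S" "Z \<in> J \<rightarrow>\<^sub>E S" by auto
    then show "(restrict (merge I J YZ) I, restrict (merge I J YZ) J) = YZ"
      and "merge I J YZ \<in> (I \<union> J) \<rightarrow>\<^sub>E S"
      using assms by (auto simp: PiE_iff extensional_restrict)
    show "(\<Prod>i\<in>I \<union> J. W (e i) (merge I J YZ i)) *
        (F (restrict (merge I J YZ) I) * G (restrict (merge I J YZ) J))
      = (case YZ of (Y, Z) \<Rightarrow> (\<Prod>i\<in>I. W (e i) (Y i)) * (\<Prod>i\<in>J. W (e i) (Z i)) * (F Y * G Z))"
      using YZ assms by (simp add: prod.union_disjoint PiE_iff extensional_restrict)
  next
    fix X assume "X \<in> (I \<union> J) \<rightarrow>\<^sub>E S"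
    then show "merge I J (restrict X I, restrict X J) = X"
      and "(restrict X I, restrict X J) \<in> (I \<rightarrow>\<^sub>E S) \<times> (J \<rightarrow>\<^sub>E S)"
      by (auto simp: PiE_iff extensional_restrict)
  qed
  finally show ?thesis ..
qed

lemma dual_eval_conv_func:
  fixes f :: "nat \<Rightarrow> 'b \<Rightarrow> real"
  assumes dual: "dual_weights M f S W" and e: "e \<in> {..<N} \<rightarrow>\<^sub>E {..<M}"
  shows "dual_eval S W {..<N} e (conv_func N M f A) = A e"
proof -
  have S: "finite S"
    and W: "\<And>j m. j < M \<Longrightarrow> m < M \<Longrightarrow> (\<Sum>x\<in>S. W j x * f m x) = (if m = j then 1 else 0)"
    using dual by (auto simp: dual_weights_def)
  let ?P = "{..<N} \<rightarrow>\<^sub>E {..<M}"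
  have "dual_eval S W {..<N} e (conv_func N M f A)
      = (\<Sum>X\<in>{..<N} \<rightarrow>\<^sub>E S. \<Sum>d\<in>?P. A d * (\<Prod>i<N. W (e i) (X i) * f (d i) (X i)))"
    unfolding dual_eval_def conv_func_def sum_distrib_left
    by (intro sum.cong refl) (simp add: prod.distrib mult_ac)
  also have "\<dots> = (\<Sum>d\<in>?P. A d * (\<Sum>X\<in>{..<N} \<rightarrow>\<^sub>E S. \<Prod>i<N. W (e i) (X i) * f (d i) (X i)))"
    by (subst sum.swap) (simp add: sum_distrib_left)
  also have "\<dots> = (\<Sum>d\<in>?P. A d * (\<Prod>i<N. \<Sum>x\<in>S. W (e i) x * f (d i) x))"
    using S by (simp add: prod_sum_PiE)
  also have "\<dots> = (\<Sum>d\<in>?P. if d = e then A d else 0)"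
  proof (rule sum.cong[OF refl])
    fix d assume d: "d \<in> ?P"
    have "(\<Prod>i<N. \<Sum>x\<in>S. W (e i) x * f (d i) x) = (\<Prod>i<N. if d i = e i then 1 else 0)"
      using d e W by (intro prod.cong) (auto simp: PiE_iff)
    also have "\<dots> = (if d = e then 1 else 0)"
    proof (cases "d = e")
      case False
      then obtain i where "i < N" "d i \<noteq> e i" using d e PiE_ext by blast
      then have "(\<Prod>i<N. if d i = e i then 1 else 0 :: real) = 0" by (intro prod_zero) auto
      then show ?thesis using False by simp
    qed simp
    finally show "A d * (\<Prod>i<N. \<Sum>x\<in>S. W (e i) x * f (d i) x) = (if d = e then A d else 0)"
      by simp
  qed
  also have "\<dots> = A e" using e by (simp add: finite_PiE)
  finally show ?thesis .
qed

definition matricize_index :: "nat \<Rightarrow> nat \<Rightarrow> nat set \<Rightarrow> nat set \<Rightarrow> nat \<Rightarrow> nat \<Rightarrow> nat \<Rightarrow> nat"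
  where "matricize_index N M I J r c =
    (\<lambda>k. if k < N then
           (if k \<in> I then digit M (card I) r (pos_in I k) else digit M (card J) c (pos_in J k))
         else undefined)"

lemma matricize_eq_mat:
  "matricize N M A I J = mat (M ^ card I) (M ^ card J) (\<lambda>(r, c). A (matricize_index N M I J r c))"
  unfolding matricize_def matricize_index_def by simp

context
  fixes N :: nat and I J :: "nat set"
  assumes part: "I \<union> J = {..<N}" "I \<inter> J = {}"
begin

lemma finite_partition: "finite I" "finite J"
  using part by (metis finite_Un finite_lessThan)+

lemma matricize_index_in_row_modes: "k \<in> I \<Longrightarrow> matricize_index N M I J r c k = digit M (card I) r (pos_in I k)"
  using part by (auto simp: matricize_index_def)

lemma matricize_index_in_col_modes: "k \<in> J \<Longrightarrow> matricize_index N M I J r c k = digit M (card J) c (pos_in J k)"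
  using part by (auto simp: matricize_index_def)

lemma matricize_index_PiE:
  assumes "r < M ^ card I" "c < M ^ card J"
  shows "matricize_index N M I J r c \<in> {..<N} \<rightarrow>\<^sub>E {..<M}"
proof -
  have "matricize_index N M I J r c k < M" if "k \<in> I \<union> J" for k
    using that assms finite_partition
    by (auto simp: matricize_index_in_row_modes matricize_index_in_col_modes card_gt_0_iff
        intro!: digit_less)
  then show ?thesis using part by (auto simp: matricize_index_def PiE_iff extensional_def)
qed

lemma bij_betw_matricize_index:
  "bij_betw (\<lambda>(r, c). matricize_index N M I J r c)
     ({..<M ^ card I} \<times> {..<M ^ card J}) ({..<N} \<rightarrow>\<^sub>E {..<M})"
proof -
  have "inj_on (\<lambda>(r, c). matricize_index N M I J r c) ({..<M ^ card I} \<times> {..<M ^ card J})"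
  proof (rule inj_onI, clarsimp)
    fix r c r' c'
    assume r: "r < M ^ card I" "r' < M ^ card I" and c: "c < M ^ card J" "c' < M ^ card J"
      and e: "matricize_index N M I J r c = matricize_index N M I J r' c'"
    show "r = r' \<and> c = c'"
      using digit_pos_in_inj[OF finite_partition(1) r] digit_pos_in_inj[OF finite_partition(2) c]
        fun_cong[OF e] by (metis matricize_index_in_row_modes matricize_index_in_col_modes)
  qed
  moreover have "card ({..<N} \<rightarrow>\<^sub>E {..<M}) = card ({..<M ^ card I} \<times> {..<M ^ card J})"
    using part finite_partition
    by (simp add: card_cartesian_product card_PiE card_Un_disjoint[symmetric] power_add[symmetric])
  ultimately have "(\<lambda>(r, c). matricize_index N M I J r c) ` ({..<M ^ card I} \<times> {..<M ^ card J})
      = {..<N} \<rightarrow>\<^sub>E {..<M}"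
    using matricize_index_PiE by (intro card_subset_eq) (auto simp: card_image finite_PiE)
  with \<open>inj_on _ _\<close> show ?thesis by (simp add: bij_betw_def)
qed

lemma conv_func_eq_bilinear:
  "conv_func N M f A X =
     (\<Sum>r<M ^ card I. \<Sum>c<M ^ card J. matricize N M A I J $$ (r, c) *
        prod_basis M f I r (restrict X I) * prod_basis M f J c (restrict X J))"
proof -
  let ?D = "matricize_index N M I J"
  have prod_split: "(\<Prod>i<N. f (?D r c i) (X i))
      = prod_basis M f I r (restrict X I) * prod_basis M f J c (restrict X J)" for r c
  proof -
    have "(\<Prod>i<N. f (?D r c i) (X i)) = (\<Prod>i\<in>I. f (?D r c i) (X i)) * (\<Prod>i\<in>J. f (?D r c i) (X i))"
      unfolding part(1)[symmetric] using finite_partition part(2) by (rule prod.union_disjoint)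
    then show ?thesis
      by (simp add: prod_basis_def matricize_index_in_row_modes matricize_index_in_col_modes cong: prod.cong)
  qed
  have "conv_func N M f A X
      = (\<Sum>(r, c)\<in>{..<M ^ card I} \<times> {..<M ^ card J}. A (?D r c) * (\<Prod>i<N. f (?D r c i) (X i)))"
    unfolding conv_func_def
    using sum.reindex_bij_betw[OF bij_betw_matricize_index, of "\<lambda>d. A d * (\<Prod>i<N. f (d i) (X i))" M]
    by (simp add: case_prod_beta)
  also have "\<dots> = (\<Sum>r<M ^ card I. \<Sum>c<M ^ card J. A (?D r c) * (\<Prod>i<N. f (?D r c i) (X i)))"
    by (rule sum.cartesian_product[symmetric])
  also have "\<dots> = (\<Sum>r<M ^ card I. \<Sum>c<M ^ card J. matricize N M A I J $$ (r, c) *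
        prod_basis M f I r (restrict X I) * prod_basis M f J c (restrict X J))"
    by (intro sum.cong refl) (simp add: matricize_eq_mat prod_split mult.assoc)
  finally show ?thesis .
qed

lemma sep_decomposition_of_matricize:
  fixes f :: "nat \<Rightarrow> 'a::euclidean_space \<Rightarrow> real"
  assumes meas: "\<And>m. m < M \<Longrightarrow> f m \<in> borel_measurable lborel"
    and sqint: "\<And>m. m < M \<Longrightarrow> integrable lborel (\<lambda>x. (f m x)\<^sup>2)"
  shows "\<exists>g g' :: nat \<Rightarrow> (nat \<Rightarrow> 'a) \<Rightarrow> real.
     (\<forall>\<nu><mat_rank (matricize N M A I J). sq_int_on I (g \<nu>) \<and> sq_int_on J (g' \<nu>)) \<and>
     (\<forall>X. conv_func N M f A X =
        (\<Sum>\<nu><mat_rank (matricize N M A I J). g \<nu> (restrict X I) * g' \<nu> (restrict X J)))"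
proof -
  let ?a = "M ^ card I" and ?b = "M ^ card J" and ?B = "matricize N M A I J"
  let ?R = "mat_rank ?B"
  have B: "?B \<in> carrier_mat ?a ?b" by (simp add: matricize_eq_mat)
  then obtain u v where uv: "\<And>r c. r < ?a \<Longrightarrow> c < ?b \<Longrightarrow> ?B $$ (r, c) = (\<Sum>\<nu><?R. u \<nu> r * v \<nu> c)"
    unfolding mat_rank_def by (metis carrier_matD(1) rank_factorization)
  define g where "g \<nu> Y = (\<Sum>r<?a. u \<nu> r * prod_basis M f I r Y)" for \<nu> Y
  define g' where "g' \<nu> Z = (\<Sum>c<?b. v \<nu> c * prod_basis M f J c Z)" for \<nu> Z
  have "sq_int_on I (g \<nu>) \<and> sq_int_on J (g' \<nu>)" for \<nu>
    unfolding g_def g'_def using finite_partition meas sqint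
    by (intro conjI sq_int_on_sum sq_int_on_prod_basis) auto
  moreover have "conv_func N M f A X = (\<Sum>\<nu><?R. g \<nu> (restrict X I) * g' \<nu> (restrict X J))" for X
  proof -
    let ?p = "\<lambda>r. prod_basis M f I r (restrict X I)" and ?q = "\<lambda>c. prod_basis M f J c (restrict X J)"
    have "conv_func N M f A X = (\<Sum>r<?a. \<Sum>c<?b. \<Sum>\<nu><?R. (u \<nu> r * ?p r) * (v \<nu> c * ?q c))"
      unfolding conv_func_eq_bilinear
      by (intro sum.cong refl) (simp add: uv sum_distrib_left sum_distrib_right mult_ac)
    also have "\<dots> = (\<Sum>r<?a. \<Sum>\<nu><?R. \<Sum>c<?b. (u \<nu> r * ?p r) * (v \<nu> c * ?q c))"
      by (intro sum.cong refl sum.swap)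
    also have "\<dots> = (\<Sum>\<nu><?R. (\<Sum>r<?a. u \<nu> r * ?p r) * (\<Sum>c<?b. v \<nu> c * ?q c))"
      by (subst sum.swap) (simp add: sum_product)
    finally show ?thesis by (simp add: g_def g'_def)
  qed
  ultimately show ?thesis by blast
qed

lemma coefficient_eq_sum_dual_eval:
  fixes f :: "nat \<Rightarrow> 'b \<Rightarrow> real" and g g' :: "nat \<Rightarrow> (nat \<Rightarrow> 'b) \<Rightarrow> real"
  assumes dual: "dual_weights M f S W" and e: "e \<in> {..<N} \<rightarrow>\<^sub>E {..<M}"
    and sep: "\<And>X. conv_func N M f A X = (\<Sum>\<nu><R. g \<nu> (restrict X I) * g' \<nu> (restrict X J))"
  shows "A e = (\<Sum>\<nu><R. dual_eval S W I e (g \<nu>) * dual_eval S W J e (g' \<nu>))"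
proof -
  have sep_fun: "conv_func N M f A = (\<lambda>X. \<Sum>\<nu><R. g \<nu> (restrict X I) * g' \<nu> (restrict X J))"
    by (rule ext) (rule sep)
  have "A e = dual_eval S W (I \<union> J) e (conv_func N M f A)"
    using dual_eval_conv_func[OF dual e] part by simp
  also have "\<dots> = (\<Sum>\<nu><R. dual_eval S W (I \<union> J) e (\<lambda>X. g \<nu> (restrict X I) * g' \<nu> (restrict X J)))"
    unfolding sep_fun by (rule dual_eval_sum)
  also have "\<dots> = (\<Sum>\<nu><R. dual_eval S W I e (g \<nu>) * dual_eval S W J e (g' \<nu>))"
    by (intro sum.cong refl dual_eval_separated finite_partition part(2))
  finally show ?thesis .
qed

lemma matricize_rank_le_sep:
  fixes f :: "nat \<Rightarrow> 'b \<Rightarrow> real" and g g' :: "nat \<Rightarrow> (nat \<Rightarrow> 'b) \<Rightarrow> real"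
  assumes linindep: "lin_indep_funs M f"
    and sep: "\<And>X. conv_func N M f A X = (\<Sum>\<nu><R. g \<nu> (restrict X I) * g' \<nu> (restrict X J))"
  shows "mat_rank (matricize N M A I J) \<le> R"
proof -
  obtain S W where dual: "dual_weights M f S W"
    using lin_indep_dual_weights[OF linindep] by auto
  let ?D = "matricize_index N M I J" and ?B = "matricize N M A I J"
  have B: "?B \<in> carrier_mat (M ^ card I) (M ^ card J)" by (simp add: matricize_eq_mat)
  have "?B $$ (r, c) = (\<Sum>\<nu><R. dual_eval S W I (?D r 0) (g \<nu>) * dual_eval S W J (?D 0 c) (g' \<nu>))"
    if "r < M ^ card I" "c < M ^ card J" for r c
  proof -
    have "?B $$ (r, c) = (\<Sum>\<nu><R. dual_eval S W I (?D r c) (g \<nu>) * dual_eval S W J (?D r c) (g' \<nu>))"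
      using that coefficient_eq_sum_dual_eval[OF dual matricize_index_PiE[OF that] sep]
      by (simp add: matricize_eq_mat)
    also have "\<dots> = (\<Sum>\<nu><R. dual_eval S W I (?D r 0) (g \<nu>) * dual_eval S W J (?D 0 c) (g' \<nu>))"
      by (intro sum.cong refl arg_cong2[where f = "(*)"] dual_eval_cong)
        (simp_all add: matricize_index_in_row_modes matricize_index_in_col_modes)
    finally show ?thesis .
  qed
  then have "vec_space.rank (M ^ card I) ?B \<le> R"
    by (intro rank_le_sum_of_rank_one[OF B,
          where u = "\<lambda>\<nu> r. dual_eval S W I (?D r 0) (g \<nu>)"
            and v = "\<lambda>\<nu> c. dual_eval S W J (?D 0 c) (g' \<nu>)"])
  then show ?thesis using B by (simp add: mat_rank_def)
qed

end

lemma sep_rank_eqI: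
  fixes h :: "(nat \<Rightarrow> 'a::euclidean_space) \<Rightarrow> real"
  assumes local: "\<And>X. h (restrict X (I \<union> J)) = h X"
    and decomp: "\<exists>g g' :: nat \<Rightarrow> (nat \<Rightarrow> 'a) \<Rightarrow> real.
       (\<forall>\<nu><R. sq_int_on I (g \<nu>) \<and> sq_int_on J (g' \<nu>)) \<and>
       (\<forall>X. h X = (\<Sum>\<nu><R. g \<nu> (restrict X I) * g' \<nu> (restrict X J)))"
    and minimal: "\<And>R' g g'. (\<And>X. h X = (\<Sum>\<nu><R'. g \<nu> (restrict X I) * g' \<nu> (restrict X J))) \<Longrightarrow> R \<le> R'"
  shows "sep_rank h I J = R"
proof (cases "I = {} \<or> J = {}")
  case True
  have "R \<le> 1"
  proof (cases "J = {}")
    case True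
    with local show ?thesis by (intro minimal[where R' = 1 and g = "\<lambda>_. h" and g' = "\<lambda>_ _. 1"]) simp
  next
    case False
    with \<open>I = {} \<or> J = {}\<close> local show ?thesis
      by (intro minimal[where R' = 1 and g = "\<lambda>_ _. 1" and g' = "\<lambda>_. h"]) simp
  qed
  moreover have "R = 0 \<longleftrightarrow> (\<forall>X. h X = 0)"
  proof
    assume "\<forall>X. h X = 0"
    then show "R = 0" using minimal[where R' = 0 and g = "\<lambda>_ _. 0" and g' = "\<lambda>_ _. 0"] by simp
  qed (use decomp in auto)
  ultimately show ?thesis using True by (auto simp: sep_rank_def)
next
  case False
  have "(LEAST R'. \<exists>g g' :: nat \<Rightarrow> (nat \<Rightarrow> 'a) \<Rightarrow> real.
      (\<forall>\<nu><R'. sq_int_on I (g \<nu>) \<and> sq_int_on J (g' \<nu>)) \<and>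
      (\<forall>X. h X = (\<Sum>\<nu><R'. g \<nu> (restrict X I) * g' \<nu> (restrict X J)))) = R"
  proof (rule Least_equality)
    fix R' assume "\<exists>g g' :: nat \<Rightarrow> (nat \<Rightarrow> 'a) \<Rightarrow> real.
      (\<forall>\<nu><R'. sq_int_on I (g \<nu>) \<and> sq_int_on J (g' \<nu>)) \<and>
      (\<forall>X. h X = (\<Sum>\<nu><R'. g \<nu> (restrict X I) * g' \<nu> (restrict X J)))"
    then obtain g g' :: "nat \<Rightarrow> (nat \<Rightarrow> 'a) \<Rightarrow> real"
      where "\<forall>X. h X = (\<Sum>\<nu><R'. g \<nu> (restrict X I) * g' \<nu> (restrict X J))" by blast
    then show "R \<le> R'" by (intro minimal[where g = g and g' = g']) blast
  qed (rule decomp)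
  then show ?thesis using False by (simp add: sep_rank_def)
qed

theorem claim1:
  fixes N M :: nat
    and f :: "nat \<Rightarrow> 'a::euclidean_space \<Rightarrow> real"
    and A :: "(nat \<Rightarrow> nat) \<Rightarrow> real"
    and I J :: "nat set"
  assumes meas: "\<And>m. m < M \<Longrightarrow> f m \<in> borel_measurable lborel"
    and sqint: "\<And>m. m < M \<Longrightarrow> integrable lborel (\<lambda>x. (f m x)\<^sup>2)"
    and linindep: "\<And>c :: nat \<Rightarrow> real.
                     (\<forall>x. (\<Sum>m<M. c m * f m x) = 0) \<Longrightarrow> (\<forall>m<M. c m = 0)"
    and part: "I \<union> J = {..<N}" "I \<inter> J = {}"
  shows "sep_rank (conv_func N M f A) I J = mat_rank (matricize N M A I J)"
proof -
  have indep: "lin_indep_funs M f"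
    unfolding lin_indep_funs_def using linindep by blast
  show ?thesis
  proof (rule sep_rank_eqI[OF _ sep_decomposition_of_matricize[OF part meas sqint]])
    show "conv_func N M f A (restrict X (I \<union> J)) = conv_func N M f A X" for X
      using conv_func_restrict by (simp add: part(1))
    show "mat_rank (matricize N M A I J) \<le> R"
      if "\<And>X. conv_func N M f A X = (\<Sum>\<nu><R. g \<nu> (restrict X I) * g' \<nu> (restrict X J))" for R g g'
      using matricize_rank_le_sep[OF part indep that] .
  qed
qed

end
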